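(* Let $A>0$, and for $\delta>0$ let $R=1-A\delta$, $g^0_\delta(r,r')=\mathbf 1_{r,r'\in[0,R]}G^{\rm neum}_\delta(r,r')$, $g^0_{n\delta}=g^0_\delta*\cdots*g^0_\delta$ ($n$-fold composition of integral kernels), and let $N_\delta\in\mathbb N$ satisfy $\delta(N_\delta-1)<1\le\delta N_\delta$. Then there is $a>0$ such that for every $\delta$ small enough $$\int g^0_{\delta N_\delta}(r,r')\,dr'\le1-a\qquad\text{for all }r\in[0,1-A\delta].$$
   Context: $G^{\rm neum}_t(r,r')$ is the Green function of $\partial_t\rho=\frac12\partial_r^2\rho$ on $[0,1]$ with Neumann boundary conditions: $G^{\rm neum}_t(r,r')=\sum_kG_t(r,r'_k)$, $G_t(r,r')=e^{-(r-r')^2/2t}/\sqrt{2\pi t}$, with $r'_k$ the images of $r'$ under repeated reflections of $[0,1]$ about its endpoints. Composition: $(g*h)(r,r')=\int g(r,s)h(s,r')ds$. *)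

theory Defs
  imports "HOL-Analysis.Analysis"
begin

definition heatG :: "real \<Rightarrow> real \<Rightarrow> real \<Rightarrow> real" where
  "heatG t r r' = exp (- ((r - r')\<^sup>2) / (2 * t)) / sqrt (2 * pi * t)"

text \<open>Neumann Green function on [0,1]: sum over all images of r' under repeated
  reflections about 0 and 1, i.e. the points 2k + r' and 2k - r', k an integer.\<close>
definition Gneum :: "real \<Rightarrow> real \<Rightarrow> real \<Rightarrow> real" where
  "Gneum t r r' = (\<Sum>\<^sub>\<infinity>k::int. heatG t r (2 * of_int k + r') + heatG t r (2 * of_int k - r'))"

definition kcomp :: "(real \<Rightarrow> real \<Rightarrow> real) \<Rightarrow> (real \<Rightarrow> real \<Rightarrow> real) \<Rightarrow> real \<Rightarrow> real \<Rightarrow> real" where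
  "kcomp g h r r' = integral {0..1} (\<lambda>s. g r s * h s r')"

definition kpow :: "(real \<Rightarrow> real \<Rightarrow> real) \<Rightarrow> nat \<Rightarrow> real \<Rightarrow> real \<Rightarrow> real" where
  "kpow g n = ((kcomp g) ^^ (n - 1)) g"

definition g0 :: "real \<Rightarrow> real \<Rightarrow> real \<Rightarrow> real \<Rightarrow> real" where
  "g0 A \<delta> r r' = (if r \<in> {0..1 - A*\<delta>} \<and> r' \<in> {0..1 - A*\<delta>} then Gneum \<delta> r r' else 0)"

end

theory Submission
  imports Defs "HOL-Probability.Distributions"
begin

text \<open>The function \<open>exp(t/2) cosh y\<close> solves the heat equation \<open>\<partial>\<^sub>t w = (1/2) \<partial>\<^sub>y\<^sup>2 w\<close>, so one
  step of the free heat kernel multiplies \<open>cosh\<close> by \<open>exp(\<delta>/2)\<close>. The Neumann kernel is the free kernel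
  folded onto \<open>[0,1]\<close> by reflections; since \<open>cosh\<close> is not reflection invariant at \<open>1\<close>, folding loses
  at most \<open>C \<delta> G\<^sub>\<delta>(x,1)\<close>. Killing on \<open>[1 - A \<delta>, 1]\<close> removes at least \<open>A \<delta> G\<^sub>\<delta>(x,1)/2\<close> of the
  mass of any function \<open>\<ge> 1/2\<close>, which pays for this loss once \<open>c C \<le> A/4\<close>. By induction on the number
  of steps, the mass after \<open>n\<close> steps from \<open>r\<close> is at most \<open>1 - c (exp(n \<delta>/2) cosh r - cosh 1)\<close>; after
  \<open>N\<^sub>\<delta> \<ge> 1/\<delta>\<close> steps it is at most \<open>1 - c (exp(1/2) - cosh 1) < 1\<close>.\<close>

lemma heatG_eq_normal_density: "t > 0 \<Longrightarrow> heatG t r z = normal_density r (sqrt t) z"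
  by (simp add: heatG_def normal_density_def power2_commute)

lemma heatG_nonneg: "t > 0 \<Longrightarrow> heatG t r z \<ge> 0"
  by (simp add: heatG_def)

lemma has_integral_heatG: "t > 0 \<Longrightarrow> (heatG t a has_integral 1) UNIV"
proof -
  assume t: "t > 0"
  have "(normal_density a (sqrt t) has_integral integral\<^sup>L lborel (normal_density a (sqrt t))) UNIV"
    using t by (intro has_integral_integral_lborel integrable_normal_density) simp
  then show ?thesis
    using t integral_normal_density[of "sqrt t" a] by (simp add: heatG_eq_normal_density[OF t, abs_def])
qed

lemma continuous_on_heatG [continuous_intros]:
  assumes "t > 0" "continuous_on S f" "continuous_on S g"
  shows "continuous_on S (\<lambda>x. heatG t (f x) (g x))"
  unfolding heatG_def using assms by (intro continuous_intros) auto

lemma heatG_antimono: "t > 0 \<Longrightarrow> \<bar>a - b\<bar> \<le> \<bar>c - d\<bar> \<Longrightarrow> heatG t c d \<le> heatG t a b"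
  unfolding heatG_def by (intro divide_right_mono) (auto simp: abs_le_square_iff intro!: divide_right_mono)

lemma heatG_mult_exp:
  assumes t: "t > 0"
  shows "heatG t x z * exp (s * z) = exp (s * x + s\<^sup>2 * t / 2) * heatG t (x + s * t) z"
proof -
  have "- (x - z)\<^sup>2 / (2 * t) + s * z = (s * x + s\<^sup>2 * t / 2) + - (x + s * t - z)\<^sup>2 / (2 * t)"
    using t by (simp add: field_simps power2_eq_square)
  then have "exp (- (x - z)\<^sup>2 / (2 * t)) * exp (s * z)
      = exp (s * x + s\<^sup>2 * t / 2) * exp (- (x + s * t - z)\<^sup>2 / (2 * t))"
    by (simp add: exp_add[symmetric])
  then show ?thesis unfolding heatG_def by (simp add: field_simps)
qed

lemma has_integral_heatG_cosh:
  assumes t: "t > 0"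
  shows "((\<lambda>z. heatG t x z * cosh z) has_integral exp (t/2) * cosh x) UNIV"
proof -
  have eq: "heatG t x z * cosh z
      = exp (x + t/2) / 2 * heatG t (x + t) z + exp (-x + t/2) / 2 * heatG t (x - t) z" for z
    using heatG_mult_exp[OF t, of x z 1] heatG_mult_exp[OF t, of x z "-1"]
    by (simp add: cosh_def algebra_simps)
  have "((\<lambda>z. exp (x + t/2) / 2 * heatG t (x + t) z + exp (-x + t/2) / 2 * heatG t (x - t) z)
      has_integral (exp (x + t/2) / 2 * 1 + exp (-x + t/2) / 2 * 1)) UNIV"
    by (intro has_integral_add has_integral_mult_right has_integral_heatG t)
  moreover have "exp (x + t/2) / 2 * 1 + exp (-x + t/2) / 2 * 1 = exp (t/2) * cosh x"
    unfolding exp_add by (simp add: cosh_field_def algebra_simps add_divide_distrib)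
  ultimately show ?thesis unfolding eq by simp
qed

lemma filterlim_symmetric_int_intervals:
  "filterlim (\<lambda>n::nat. {-int n..int n}) (finite_subsets_at_top (UNIV::int set)) sequentially"
  unfolding filterlim_finite_subsets_at_top
proof (intro allI impI)
  fix X :: "int set" assume "finite X \<and> X \<subseteq> UNIV"
  then obtain m where m: "\<And>k. k \<in> X \<Longrightarrow> \<bar>k\<bar> \<le> m"
    using bdd_above_finite[of "abs ` X"] by (auto simp: bdd_above_def)
  show "\<forall>\<^sub>F n in sequentially. finite {- int n..int n} \<and> X \<subseteq> {- int n..int n} \<and> {- int n..int n} \<subseteq> UNIV"
    using eventually_ge_at_top[of "nat m"] by eventually_elim (use m in force)
qed

lemma has_sum_imp_symmetric_sums_tendsto:
  fixes f :: "int \<Rightarrow> 'a::topological_comm_monoid_add"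
  assumes "(f has_sum s) UNIV"
  shows "(\<lambda>n. \<Sum>k\<in>{-int n..int n}. f k) \<longlonglongrightarrow> s"
  using filterlim_compose[OF assms[unfolded has_sum_def] filterlim_symmetric_int_intervals]
  by (simp add: o_def)

lemma nonneg_symmetric_sums_tendsto_imp_has_sum:
  fixes f :: "int \<Rightarrow> real"
  assumes nn: "\<And>k. f k \<ge> 0"
    and lim: "(\<lambda>n. \<Sum>k\<in>{-int n..int n}. f k) \<longlonglongrightarrow> s"
  shows "(f has_sum s) UNIV"
proof -
  have le_s: "(\<Sum>k\<in>{-int n..int n}. f k) \<le> s" for n
  proof (rule LIMSEQ_le_const[OF lim])
    show "\<exists>N. \<forall>m\<ge>N. (\<Sum>k\<in>{-int n..int n}. f k) \<le> (\<Sum>k\<in>{-int m..int m}. f k)"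
      by (intro exI[of _ n] allI impI sum_mono2) (auto simp: nn)
  qed
  have "f summable_on UNIV"
  proof (rule nonneg_bdd_above_summable_on)
    show "bdd_above (sum f ` {F. F \<subseteq> UNIV \<and> finite F})"
    proof (rule bdd_aboveI2)
      fix F :: "int set" assume "F \<in> {F. F \<subseteq> UNIV \<and> finite F}"
      then obtain m where m: "\<And>k. k \<in> F \<Longrightarrow> \<bar>k\<bar> \<le> m"
        using bdd_above_finite[of "abs ` F"] by (auto simp: bdd_above_def)
      have "sum f F \<le> (\<Sum>k\<in>{-int (nat m)..int (nat m)}. f k)"
        by (rule sum_mono2) (use m nn in force)+
      also have "\<dots> \<le> s" by (rule le_s)
      finally show "sum f F \<le> s" .
    qed
  qed (simp add: nn)
  then have "(f has_sum infsum f UNIV) UNIV" by simp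
  moreover from has_sum_imp_symmetric_sums_tendsto[OF this] lim have "infsum f UNIV = s"
    using LIMSEQ_unique by blast
  ultimately show ?thesis by simp
qed

lemma integral_exhaustion_tendsto:
  fixes \<phi> :: "real \<Rightarrow> real"
  assumes nn: "\<And>z. \<phi> z \<ge> 0" and int: "\<phi> integrable_on UNIV"
    and intI: "\<And>n. \<phi> integrable_on I n"
    and mono: "\<And>n. I n \<subseteq> I (Suc n)" and cover: "\<And>z. \<exists>n. z \<in> I n"
  shows "(\<lambda>n. integral (I n) \<phi>) \<longlonglongrightarrow> integral UNIV \<phi>"
proof -
  define f where "f n z = (if z \<in> I n then \<phi> z else 0)" for n z
  have f_int: "f n integrable_on UNIV" for n
    unfolding f_def using intI integrable_restrict_UNIV by blast
  have f_mono: "f n z \<le> f (Suc n) z" for n z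
    unfolding f_def using mono nn by auto
  have f_lim: "(\<lambda>n. f n z) \<longlonglongrightarrow> \<phi> z" for z
  proof -
    obtain n where n: "z \<in> I n" using cover by blast
    have "\<forall>\<^sub>F m in sequentially. f m z = \<phi> z"
      using eventually_ge_at_top[of n]
      by eventually_elim (use n lift_Suc_mono_le[of I, OF mono] in \<open>auto simp: f_def\<close>)
    then show ?thesis by (rule tendsto_eventually)
  qed
  have "\<bar>integral UNIV (f n)\<bar> \<le> integral UNIV \<phi>" for n
    using integral_nonneg[OF f_int, of n] integral_le[OF f_int int, of n]
    by (simp add: f_def nn)
  then have "bounded (range (\<lambda>n. integral UNIV (f n)))"
    by (intro boundedI[of _ "integral UNIV \<phi>"]) auto
  moreover have "integral UNIV (f n) = integral (I n) \<phi>" for n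
    unfolding f_def by (rule integral_restrict_UNIV)
  ultimately show ?thesis
    using monotone_convergence_increasing[OF f_int f_mono f_lim] by simp
qed

section \<open>Folding the line onto the unit interval\<close>

lemma integral_reflection_pair:
  fixes \<phi> :: "real \<Rightarrow> real"
  assumes cont: "continuous_on UNIV \<phi>"
  shows "integral {0..1} (\<lambda>y. \<phi> (c + y) + \<phi> (c - y)) = integral {c-1..c+1} \<phi>"
proof -
  have int: "\<phi> integrable_on {u..v}" for u v
    by (rule integrable_continuous_interval) (rule continuous_on_subset[OF cont], simp)
  have "integral {0..1} (\<lambda>y. \<phi> (c + y) + \<phi> (c - y))
      = integral {0..1} (\<lambda>y. \<phi> (c + y)) + integral {0..1} (\<lambda>y. \<phi> (c - y))"
    by (intro integral_add integrable_continuous_interval continuous_on_compose2[OF cont]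
        continuous_intros) auto
  also have "integral {0..1} (\<lambda>y. \<phi> (c + y)) = integral {c..c+1} \<phi>"
    using integral_shift_Icc_real[of 0 1 \<phi> c] by (simp add: o_def add.commute)
  also have "integral {0..1} (\<lambda>y. \<phi> (c - y)) = integral {-1..0} (\<lambda>u. \<phi> (c + u))"
    using Henstock_Kurzweil_Integration.integral_reflect_real[of 0 "-1" "\<lambda>u. \<phi> (c + u)"] by simp
  also have "\<dots> = integral {c-1..c} \<phi>"
    using integral_shift_Icc_real[of "-1" 0 \<phi> c] by (simp add: o_def add.commute)
  also have "integral {c..c+1} \<phi> + integral {c-1..c} \<phi> = integral {c-1..c+1} \<phi>"
    using Henstock_Kurzweil_Integration.integral_combine[of "c-1" c "c+1" \<phi>] int by simp
  finally show ?thesis .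
qed

lemma sum_integral_reflection_pairs:
  fixes \<phi> :: "real \<Rightarrow> real"
  assumes cont: "continuous_on UNIV \<phi>"
  shows "(\<Sum>k\<in>{-int n..int n}. integral {0..1} (\<lambda>y. \<phi> (2 * of_int k + y) + \<phi> (2 * of_int k - y)))
         = integral {-2 * real n - 1..2 * real n + 1} \<phi>"
proof (induction n)
  case 0
  then show ?case using integral_reflection_pair[OF cont, of 0] by simp
next
  case (Suc n)
  let ?P = "\<lambda>k::int. integral {0..1} (\<lambda>y. \<phi> (2 * of_int k + y) + \<phi> (2 * of_int k - y))"
  have int: "\<phi> integrable_on {u..v}" for u v
    by (rule integrable_continuous_interval) (rule continuous_on_subset[OF cont], simp)
  have "{-int (Suc n)..int (Suc n)} = insert (-int (Suc n)) (insert (int (Suc n)) {-int n..int n})"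
    by auto
  then have "(\<Sum>k\<in>{-int (Suc n)..int (Suc n)}. ?P k)
      = ?P (-int (Suc n)) + (?P (int (Suc n)) + (\<Sum>k\<in>{-int n..int n}. ?P k))"
    by simp
  also have "?P (-int (Suc n)) = integral {2 * of_int (-int (Suc n)) - 1..2 * of_int (-int (Suc n)) + 1} \<phi>"
    by (rule integral_reflection_pair[OF cont])
  also have "{2 * of_int (-int (Suc n)) - 1..2 * of_int (-int (Suc n)) + 1} = {-2 * real n - 3..-2 * real n - 1}"
    by (simp add: algebra_simps)
  also have "?P (int (Suc n)) = integral {2 * of_int (int (Suc n)) - 1..2 * of_int (int (Suc n)) + 1} \<phi>"
    by (rule integral_reflection_pair[OF cont])
  also have "{2 * of_int (int (Suc n)) - 1..2 * of_int (int (Suc n)) + 1} = {2 * real n + 1..2 * real n + 3}"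
    by (simp add: algebra_simps)
  also have "integral {2 * real n + 1..2 * real n + 3} \<phi> + (\<Sum>k\<in>{-int n..int n}. ?P k)
      = integral {-2 * real n - 1..2 * real n + 3} \<phi>"
    using Henstock_Kurzweil_Integration.integral_combine[of "-2*real n-1" "2*real n+1" "2*real n+3" \<phi>]
      int Suc by simp
  also have "integral {-2 * real n - 3..-2 * real n - 1} \<phi> + \<dots> = integral {-2 * real n - 3..2 * real n + 3} \<phi>"
    using Henstock_Kurzweil_Integration.integral_combine[of "-2*real n-3" "-2*real n-1" "2*real n+3" \<phi>]
      int by simp
  also have "{-2 * real n - 3..2 * real n + 3} = {-2 * real (Suc n) - 1..2 * real (Suc n) + 1}"
    by (simp add: algebra_simps)
  finally show ?case .
qed

lemma has_sum_integral_reflection_pairs: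
  fixes \<phi> :: "real \<Rightarrow> real"
  assumes cont: "continuous_on UNIV \<phi>" and nn: "\<And>z. \<phi> z \<ge> 0" and int: "\<phi> integrable_on UNIV"
  shows "((\<lambda>k::int. integral {0..1} (\<lambda>y. \<phi> (2 * of_int k + y) + \<phi> (2 * of_int k - y)))
          has_sum integral UNIV \<phi>) UNIV"
proof (rule nonneg_symmetric_sums_tendsto_imp_has_sum)
  have int_Icc: "\<phi> integrable_on {u..v}" for u v
    by (rule integrable_continuous_interval) (rule continuous_on_subset[OF cont], simp)
  show "0 \<le> integral {0..1} (\<lambda>y. \<phi> (2 * of_int k + y) + \<phi> (2 * of_int k - y))" for k
    unfolding integral_reflection_pair[OF cont] by (rule integral_nonneg[OF int_Icc nn])
  have "(\<lambda>n. integral {-2 * real n - 1..2 * real n + 1} \<phi>) \<longlonglongrightarrow> integral UNIV \<phi>"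
  proof (rule integral_exhaustion_tendsto[OF nn int int_Icc])
    show "{-2 * real n - 1..2 * real n + 1} \<subseteq> {-2 * real (Suc n) - 1..2 * real (Suc n) + 1}" for n
      by auto
    show "\<exists>n. z \<in> {-2 * real n - 1..2 * real n + 1}" for z
    proof -
      obtain n where "\<bar>z\<bar> \<le> real n" using real_arch_simple by blast
      then show ?thesis by (intro exI[of _ n]) auto
    qed
  qed
  then show "(\<lambda>n. \<Sum>k\<in>{-int n..int n}. integral {0..1} (\<lambda>y. \<phi> (2 * of_int k + y) + \<phi> (2 * of_int k - y)))
      \<longlonglongrightarrow> integral UNIV \<phi>"
    by (simp add: sum_integral_reflection_pairs[OF cont])
qed

definition Gneum_term :: "real \<Rightarrow> real \<Rightarrow> real \<Rightarrow> int \<Rightarrow> real" where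
  "Gneum_term t x y k = heatG t x (2 * of_int k + y) + heatG t x (2 * of_int k - y)"

lemma Gneum_eq_infsum: "Gneum t x y = (\<Sum>\<^sub>\<infinity>k. Gneum_term t x y k)"
  by (simp add: Gneum_def Gneum_term_def)

lemma Gneum_term_nonneg: "t > 0 \<Longrightarrow> Gneum_term t x y k \<ge> 0"
  by (simp add: Gneum_term_def heatG_nonneg)

lemma continuous_on_Gneum_term [continuous_intros]:
  "t > 0 \<Longrightarrow> continuous_on S f \<Longrightarrow> continuous_on S g \<Longrightarrow>
    continuous_on S (\<lambda>z. Gneum_term t (f z) (g z) k)"
  unfolding Gneum_term_def by (intro continuous_intros)

lemma summable_on_exp_neg_abs_int:
  fixes c :: real
  assumes c: "c > 0"
  shows "(\<lambda>k::int. exp (- c * \<bar>of_int k\<bar>)) summable_on UNIV"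
proof -
  let ?g = "\<lambda>k::int. exp (- c * \<bar>of_int k\<bar>)"
  have geom: "summable (\<lambda>n. exp (-c) ^ n)"
    by (rule summable_geometric) (use c in simp)
  have nonneg: "?g summable_on range int"
  proof (subst summable_on_reindex)
    have "?g \<circ> int = (\<lambda>n. exp (-c) ^ n)"
      by (simp add: fun_eq_iff exp_of_nat_mult[symmetric] mult.commute)
    then show "(?g \<circ> int) summable_on UNIV"
      using geom by (auto intro: summable_nonneg_imp_summable_on)
  qed simp
  have neg: "?g summable_on range (\<lambda>n::nat. - int n - 1)"
  proof (subst summable_on_reindex)
    have "?g \<circ> (\<lambda>n::nat. - int n - 1) = (\<lambda>n. exp (-c) * exp (-c) ^ n)"
      by (simp add: fun_eq_iff exp_of_nat_mult[symmetric] exp_add[symmetric] algebra_simps)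
    then show "(?g \<circ> (\<lambda>n::nat. - int n - 1)) summable_on UNIV"
      using summable_mult[OF geom, of "exp (-c)"] by (auto intro: summable_nonneg_imp_summable_on)
  qed (auto simp: inj_on_def)
  have "UNIV = range int \<union> range (\<lambda>n::nat. - int n - 1)"
  proof -
    have "k \<in> range int \<union> range (\<lambda>n::nat. - int n - 1)" for k :: int
    proof (cases "k \<ge> 0")
      case True then show ?thesis by (auto intro: image_eqI[of _ _ "nat k"])
    next
      case False then show ?thesis by (auto intro!: image_eqI[of _ _ "nat (-k-1)"])
    qed
    then show ?thesis by blast
  qed
  moreover have "?g summable_on (range int \<union> range (\<lambda>n::nat. - int n - 1))"
    by (rule summable_on_Un_disjoint[OF nonneg neg]) auto
  ultimately show ?thesis by simp
qed

lemma abs_int_le_sq_diff_even: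
  fixes u :: real and k :: int
  assumes "\<bar>u\<bar> \<le> 2"
  shows "\<bar>of_int k\<bar> - 1 \<le> (u - 2 * of_int k)\<^sup>2"
proof (cases "k = 0")
  case True
  have "(-1::real) \<le> u\<^sup>2" using zero_le_power2[of u] by linarith
  then show ?thesis using True by simp
next
  case False
  then have k1: "\<bar>of_int k\<bar> \<ge> (1::real)" by linarith
  define m where "m = \<bar>of_int k\<bar> - (1::real)"
  have m0: "m \<ge> 0" using k1 m_def by simp
  have "\<bar>u - 2 * of_int k\<bar> \<ge> 2 * m" using assms unfolding m_def by (cases "(of_int k::real) \<ge> 0"; simp add: abs_if split: if_splits; linarith)
  then have "(u - 2 * of_int k)\<^sup>2 \<ge> (2*m)\<^sup>2"
    unfolding abs_le_square_iff[symmetric] using m0 by simp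
  moreover have "(2*m)\<^sup>2 \<ge> m"
  proof (cases "m \<ge> 1")
    case True then show ?thesis by (simp add: power2_eq_square)
  next
    case False
    then have "\<bar>of_int k\<bar> < (2::real)" unfolding m_def by simp
    then have "\<bar>k\<bar> < 2" by linarith
    then have "\<bar>k\<bar> = 1" using False m0 \<open>k \<noteq> 0\<close> by linarith
    then have "m = 0" unfolding m_def by simp
    then show ?thesis by simp
  qed
  ultimately show ?thesis unfolding m_def by linarith
qed

lemma heatG_image_le:
  assumes t: "t > 0" and u: "\<bar>x - y\<bar> \<le> 2"
  shows "heatG t x (2 * of_int k + y) \<le> exp (1/(2*t)) / sqrt (2*pi*t) * exp (- (1/(2*t)) * \<bar>of_int k\<bar>)"
proof -
  have "\<bar>of_int k\<bar> - 1 \<le> (x - (2 * of_int k + y))\<^sup>2"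
    using abs_int_le_sq_diff_even[OF u, of k] by (simp add: algebra_simps)
  then have "exp (- (x - (2 * of_int k + y))\<^sup>2 / (2 * t)) \<le> exp (- (\<bar>of_int k\<bar> - 1) / (2*t))"
    using t by (intro iffD2[OF exp_le_cancel_iff] divide_right_mono) auto
  also have "\<dots> = exp (1/(2*t)) * exp (- (1/(2*t)) * \<bar>of_int k\<bar>)"
    using t by (simp add: exp_add[symmetric] add_divide_distrib[symmetric] divide_simps)
  finally show ?thesis unfolding heatG_def using t by (simp add: divide_right_mono mult.commute)
qed

definition Gneum_majorant :: "real \<Rightarrow> int \<Rightarrow> real" where
  "Gneum_majorant t k = 2 * (exp (1/(2*t)) / sqrt (2*pi*t) * exp (- (1/(2*t)) * \<bar>of_int k\<bar>))"

lemma summable_Gneum_majorant: "t > 0 \<Longrightarrow> Gneum_majorant t summable_on UNIV"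
  unfolding Gneum_majorant_def by (intro summable_on_cmult_right summable_on_exp_neg_abs_int) simp

lemma Gneum_term_le_majorant:
  assumes t: "t > 0" and xy: "x \<in> {0..1}" "y \<in> {0..1}"
  shows "Gneum_term t x y k \<le> Gneum_majorant t k"
proof -
  let ?E = "exp (1/(2*t)) / sqrt (2*pi*t) * exp (- (1/(2*t)) * \<bar>of_int k\<bar>)"
  have "heatG t x (2 * of_int k + y) \<le> ?E"
    by (rule heatG_image_le[OF t]) (use xy in auto)
  moreover have "heatG t x (2 * of_int k + (-y)) \<le> ?E"
    by (rule heatG_image_le[OF t]) (use xy in auto)
  ultimately show ?thesis unfolding Gneum_term_def Gneum_majorant_def by simp
qed

lemma summable_Gneum_term:
  assumes t: "t > 0" and "x \<in> {0..1}" "y \<in> {0..1}"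
  shows "Gneum_term t x y summable_on UNIV"
  by (rule summable_on_comparison_test[OF summable_Gneum_majorant[OF t]])
    (use Gneum_term_le_majorant[OF assms] Gneum_term_nonneg[OF t] in auto)

lemma Gneum_nonneg: "t > 0 \<Longrightarrow> Gneum t x y \<ge> 0"
  unfolding Gneum_eq_infsum by (rule infsum_nonneg) (rule Gneum_term_nonneg)

lemma heatG_le_Gneum:
  assumes t: "t > 0" and xy: "x \<in> {0..1}" "y \<in> {0..1}"
  shows "heatG t x y \<le> Gneum t x y"
proof -
  have "heatG t x y \<le> sum (Gneum_term t x y) {0}"
    using heatG_nonneg[OF t] by (simp add: Gneum_term_def)
  also have "\<dots> \<le> Gneum t x y"
    unfolding Gneum_eq_infsum using Gneum_term_nonneg[OF t]
    by (intro finite_sum_le_has_sum[OF has_sum_infsum[OF summable_Gneum_term[OF t xy]]]) auto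
  finally show ?thesis .
qed

lemma continuous_on_Gneum:
  assumes t: "t > 0"
  shows "continuous_on ({0..1} \<times> {0..1}) (\<lambda>p. Gneum t (fst p) (snd p))"
proof -
  have "uniform_limit ({0..1} \<times> {0..1}) (\<lambda>X p. \<Sum>k\<in>X. Gneum_term t (fst p) (snd p) k)
      (\<lambda>p. \<Sum>\<^sub>\<infinity>k. Gneum_term t (fst p) (snd p) k) (finite_subsets_at_top UNIV)"
    using Gneum_term_le_majorant[OF t] Gneum_term_nonneg[OF t]
    by (intro Weierstrass_m_test_general[OF _ summable_Gneum_majorant[OF t]])
       (auto simp: mem_Times_iff)
  moreover have "\<forall>\<^sub>F X in finite_subsets_at_top UNIV.
      continuous_on ({0..1} \<times> {0..1}) (\<lambda>p. \<Sum>k\<in>X. Gneum_term t (fst p) (snd p) k)"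
    using t by (intro eventually_finite_subsets_at_top_weakI continuous_intros) auto
  ultimately show ?thesis
    unfolding Gneum_eq_infsum by (intro uniform_limit_theorem) auto
qed

text \<open>The image series converges uniformly on the unit square, so it may be integrated termwise.\<close>
lemma continuous_on_Gneum_right:
  assumes t: "t > 0" and x: "x \<in> {0..1}" and S: "S \<subseteq> {0..1}"
  shows "continuous_on S (Gneum t x)"
  using S x by (intro continuous_on_compose2[OF continuous_on_Gneum[OF t], where f="\<lambda>y. (x, y)", simplified])
    (auto intro!: continuous_intros)

lemma has_sum_integral_Gneum_term_mult:
  assumes t: "t > 0" and x: "x \<in> {0..1}" and g: "continuous_on {0..1} g"
  shows "((\<lambda>k. integral {0..1} (\<lambda>y. Gneum_term t x y k * g y))
          has_sum integral {0..1} (\<lambda>y. Gneum t x y * g y)) UNIV"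
proof -
  obtain B where B: "\<forall>y\<in>{0..1}. \<bar>g y\<bar> \<le> B"
    using compact_imp_bounded[OF compact_continuous_image[OF g compact_Icc]]
    by (force simp: bounded_iff)
  have "uniform_limit {0..1} (\<lambda>X y. \<Sum>k\<in>X. Gneum_term t x y k * g y)
      (\<lambda>y. \<Sum>\<^sub>\<infinity>k. Gneum_term t x y k * g y) (finite_subsets_at_top UNIV)"
  proof (rule Weierstrass_m_test_general)
    show "(\<lambda>k. Gneum_majorant t k * B) summable_on UNIV"
      by (intro summable_on_cmult_left summable_Gneum_majorant t)
    show "norm (Gneum_term t x y k * g y) \<le> Gneum_majorant t k * B" if y: "y \<in> {0..1}" for k y
    proof -
      have "norm (Gneum_term t x y k * g y) = Gneum_term t x y k * \<bar>g y\<bar>"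
        using Gneum_term_nonneg[OF t] by (simp add: abs_mult)
      also have "\<dots> \<le> Gneum_majorant t k * B"
        using Gneum_term_le_majorant[OF t x y] order_trans[OF Gneum_term_nonneg[OF t] Gneum_term_le_majorant[OF t x y]] B y
        by (intro mult_mono) auto
      finally show ?thesis .
    qed
  qed
  moreover have "continuous_on {0..1} (\<lambda>y. \<Sum>k\<in>X. Gneum_term t x y k * g y)" for X
    using t g by (intro continuous_intros) auto
  ultimately obtain I J where
    I: "\<And>X. ((\<lambda>y. \<Sum>k\<in>X. Gneum_term t x y k * g y) has_integral I X) {0..1}" and
    J: "((\<lambda>y. \<Sum>\<^sub>\<infinity>k. Gneum_term t x y k * g y) has_integral J) {0..1}" and
    lim: "(I \<longlongrightarrow> J) (finite_subsets_at_top UNIV)"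
    by (rule uniform_limit_integral) auto
  have "I X = (\<Sum>k\<in>X. integral {0..1} (\<lambda>y. Gneum_term t x y k * g y))" if X: "finite X" for X
  proof -
    have "((\<lambda>y. \<Sum>k\<in>X. Gneum_term t x y k * g y)
        has_integral (\<Sum>k\<in>X. integral {0..1} (\<lambda>y. Gneum_term t x y k * g y))) {0..1}"
      using t g by (intro has_integral_sum[OF X] integrable_integral integrable_continuous_interval
          continuous_intros) auto
    then show ?thesis by (rule has_integral_unique[OF I])
  qed
  then have "\<forall>\<^sub>F X in finite_subsets_at_top UNIV.
      I X = (\<Sum>k\<in>X. integral {0..1} (\<lambda>y. Gneum_term t x y k * g y))"
    by (intro eventually_finite_subsets_at_top_weakI)
  moreover have "J = integral {0..1} (\<lambda>y. Gneum t x y * g y)"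
    using J by (simp add: integral_unique Gneum_eq_infsum infsum_cmult_left')
  ultimately show ?thesis
    unfolding has_sum_def using Lim_transform_eventually[OF lim] by simp
qed

lemma has_integral_Gneum:
  assumes t: "t > 0" and x: "x \<in> {0..1}"
  shows "(Gneum t x has_integral 1) {0..1}"
proof -
  have "((\<lambda>k. integral {0..1} (\<lambda>y. Gneum_term t x y k)) has_sum integral UNIV (heatG t x)) UNIV"
    unfolding Gneum_term_def using has_integral_heatG[OF t, of x] t
    by (intro has_sum_integral_reflection_pairs) (auto intro!: continuous_intros simp: heatG_nonneg)
  moreover have "integral UNIV (heatG t x) = 1"
    using has_integral_heatG[OF t] by (rule integral_unique)
  moreover have "((\<lambda>k. integral {0..1} (\<lambda>y. Gneum_term t x y k)) has_sum integral {0..1} (Gneum t x)) UNIV"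
    using has_sum_integral_Gneum_term_mult[OF t x continuous_on_const[of _ 1]] by simp
  ultimately have "integral {0..1} (Gneum t x) = 1"
    using has_sum_unique by metis
  moreover have "Gneum t x integrable_on {0..1}"
    by (rule integrable_continuous_interval[OF continuous_on_Gneum_right[OF t x order_refl]])
  ultimately show ?thesis by (simp add: has_integral_integral)
qed

section \<open>The hyperbolic cosine as a test function\<close>

text \<open>\<open>cosh_defect w\<close> bounds the amount by which \<open>cosh\<close> at an image point \<open>w = 2k \<plusminus> y\<close> exceeds
  \<open>cosh y\<close>; it vanishes on \<open>[-1,1]\<close> and is Gaussian-integrable against the heat kernel started
  from \<open>x \<in> [0,1]\<close>, with an integral of order \<open>t G\<^sub>t(x,1)\<close>.\<close>
definition cosh_defect :: "real \<Rightarrow> real" where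
  "cosh_defect w = 2 * max (\<bar>w\<bar> - 1) 0 * exp \<bar>w\<bar>"

lemma cosh_defect_nonneg: "cosh_defect w \<ge> 0"
  by (simp add: cosh_defect_def)

lemma cosh_defect_minus [simp]: "cosh_defect (- w) = cosh_defect w"
  by (simp add: cosh_defect_def)

lemma continuous_on_cosh_defect [continuous_intros]:
  "continuous_on S f \<Longrightarrow> continuous_on S (\<lambda>x. cosh_defect (f x))"
  unfolding cosh_defect_def by (intro continuous_intros)

lemma cosh_le_exp_abs: "cosh (w::real) \<le> exp \<bar>w\<bar>"
proof -
  have "exp w \<le> exp \<bar>w\<bar>" "exp (-w) \<le> exp \<bar>w\<bar>" by simp_all
  moreover have "cosh w = (exp w + exp (-w)) / 2" by (simp add: cosh_field_def)
  ultimately show ?thesis by argo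
qed

lemma cosh_diff_le:
  fixes a b :: real
  assumes "0 \<le> a" "a \<le> b"
  shows "cosh b - cosh a \<le> (b - a) / 2 * exp b"
proof -
  have "(1 + (a - b)) * exp b \<le> exp (a - b) * exp b"
    using exp_ge_add_one_self[of "a - b"] by (intro mult_right_mono) auto
  then have "exp b - exp a \<le> (b - a) * exp b" by (simp add: exp_diff algebra_simps)
  moreover have "exp (-b) \<le> exp (-a)" using assms by simp
  ultimately show ?thesis unfolding cosh_field_def by argo
qed

lemma cosh_sub_defect_le:
  fixes y w :: real
  assumes y: "y \<in> {0..1}" and w: "\<bar>w\<bar> = y \<or> \<bar>w\<bar> \<ge> 2 - y"
  shows "cosh w - cosh_defect w \<le> cosh y"
proof (cases "\<bar>w\<bar> = y")
  case True
  then have "cosh w = cosh y" by (metis cosh_real_abs)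
  then show ?thesis using cosh_defect_nonneg[of w] by linarith
next
  case False
  then have w2: "\<bar>w\<bar> \<ge> 2 - y" using w by auto
  show ?thesis
  proof (cases "\<bar>w\<bar> \<le> 2")
    case True
    have "cosh (2 - abs w) \<le> cosh y" using w2 True y by (simp add: cosh_real_nonneg_le_iff)
    moreover have "cosh (abs w) - cosh (2 - abs w) \<le> (abs w - (2 - abs w)) / 2 * exp (abs w)"
      by (rule cosh_diff_le) (use True w2 y in auto)
    moreover have "(abs w - (2 - abs w)) / 2 * exp (abs w) \<le> cosh_defect w"
      unfolding cosh_defect_def using w2 y by (intro mult_right_mono) auto
    ultimately show ?thesis using cosh_real_abs[of w] by linarith
  next
    case False
    have "cosh w \<le> exp \<bar>w\<bar>" by (rule cosh_le_exp_abs)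
    also have "\<dots> \<le> cosh_defect w" unfolding cosh_defect_def using False by (simp add: max_def)
    finally show ?thesis using cosh_real_pos[of y] by linarith
  qed
qed

lemma cosh_image_sub_defect_le:
  fixes k :: int and y :: real
  assumes y: "y \<in> {0..1}"
  shows "cosh (2 * of_int k + y) - cosh_defect (2 * of_int k + y) \<le> cosh y"
proof (rule cosh_sub_defect_le[OF y])
  consider "k = 0" | "(of_int k::real) \<ge> 1" | "(of_int k::real) \<le> -1" by linarith
  then show "\<bar>2 * of_int k + y\<bar> = y \<or> \<bar>2 * of_int k + y\<bar> \<ge> 2 - y"
    using y by cases (auto simp: abs_if)
qed

lemma Gneum_term_mult_cosh_ge:
  assumes t: "t > 0" and y: "y \<in> {0..1}"
  shows "heatG t x (2 * of_int k + y) * (cosh (2 * of_int k + y) - cosh_defect (2 * of_int k + y))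
       + heatG t x (2 * of_int k - y) * (cosh (2 * of_int k - y) - cosh_defect (2 * of_int k - y))
       \<le> Gneum_term t x y k * cosh y"
proof -
  have "2 * of_int k - y = - (2 * of_int (-k) + y)" by simp
  then have "cosh (2 * of_int k - y) - cosh_defect (2 * of_int k - y) \<le> cosh y"
    using cosh_image_sub_defect_le[OF y, of "-k"] by (simp only: cosh_minus cosh_defect_minus)
  then show ?thesis
    using cosh_image_sub_defect_le[OF y, of k] heatG_nonneg[OF t]
    unfolding Gneum_term_def distrib_right by (intro add_mono mult_left_mono) auto
qed

lemma mult_exp_neg_square_le_1: "(u::real) * exp (- u\<^sup>2) \<le> 1"
proof -
  have "u \<le> 1 + u\<^sup>2" using zero_le_power2[of "u - 1/2"] by (simp add: power2_eq_square algebra_simps)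
  also have "\<dots> \<le> exp (u\<^sup>2)" by (rule exp_ge_add_one_self)
  finally show ?thesis by (simp add: exp_minus field_simps)
qed

lemma mult_exp_neg_square_div_le:
  assumes t: "t > 0"
  shows "v * exp (- v\<^sup>2 / (8*t)) \<le> sqrt (8*t)"
proof -
  have s: "sqrt (8*t) > 0" "(sqrt (8*t))\<^sup>2 = 8*t" using t by simp_all
  then have "v * exp (- v\<^sup>2 / (8*t)) = sqrt (8*t) * ((v / sqrt (8*t)) * exp (- (v / sqrt (8*t))\<^sup>2))"
    by (simp add: power_divide)
  also have "\<dots> \<le> sqrt (8*t)"
    using s mult_exp_neg_square_le_1[of "v / sqrt (8*t)"] by (simp add: mult_le_cancel_left1)
  finally show ?thesis .
qed

lemma mult_exp_mult_gauss_le: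
  assumes t: "t > 0" and v: "v \<ge> 0"
  shows "v * exp v * exp (- v\<^sup>2 / (2*t)) \<le> exp t * sqrt (8*t) * exp (- v\<^sup>2 / (8*t))"
proof -
  have "v + - v\<^sup>2 / (2*t) \<le> t + - v\<^sup>2 / (8*t) + - v\<^sup>2 / (8*t)"
  proof -
    have "0 \<le> (v - 2*t)\<^sup>2 / (4*t)" using t by simp
    also have "(v - 2*t)\<^sup>2 / (4*t) = (t + - v\<^sup>2 / (8*t) + - v\<^sup>2 / (8*t)) - (v + - v\<^sup>2 / (2*t))"
      using t by (simp add: field_simps power2_eq_square)
    finally show ?thesis by simp
  qed
  then have "v * exp (v + - v\<^sup>2 / (2*t)) \<le> v * exp (t + - v\<^sup>2 / (8*t) + - v\<^sup>2 / (8*t))"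
    using v by (intro mult_left_mono) auto
  then have "v * exp v * exp (- v\<^sup>2 / (2*t)) \<le> v * exp (t + - v\<^sup>2 / (8*t) + - v\<^sup>2 / (8*t))"
    by (simp only: exp_add mult.assoc)
  also have "\<dots> = exp t * (v * exp (- v\<^sup>2 / (8*t))) * exp (- v\<^sup>2 / (8*t))"
    by (simp only: exp_add mult_ac)
  also have "\<dots> \<le> exp t * sqrt (8*t) * exp (- v\<^sup>2 / (8*t))"
    using mult_exp_neg_square_div_le[OF t, of v] by (intro mult_right_mono mult_left_mono) auto
  finally show ?thesis .
qed

lemma heatG_le_heatG_1_mult:
  assumes t: "t > 0" and x: "x \<in> {0..1}" and z: "1 \<le> \<bar>z\<bar>"
  shows "heatG t x z \<le> heatG t x 1 * exp (- (\<bar>z\<bar> - 1)\<^sup>2 / (2*t))"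
proof -
  have "0 \<le> (\<bar>z\<bar> - 1) * (1 - x)" "0 \<le> (\<bar>z\<bar> - 1) * (x + 1)" using x z by simp_all
  then have "(x - 1)\<^sup>2 + (\<bar>z\<bar> - 1)\<^sup>2 \<le> (x - z)\<^sup>2"
    using x by (cases "z \<ge> 0"; simp add: power2_eq_square algebra_simps abs_if split: if_splits; linarith)
  then have "- (x - z)\<^sup>2 / (2*t) \<le> - ((x - 1)\<^sup>2 + (\<bar>z\<bar> - 1)\<^sup>2) / (2*t)"
    using t by (intro divide_right_mono) auto
  also have "\<dots> = - (x - 1)\<^sup>2 / (2*t) + - (\<bar>z\<bar> - 1)\<^sup>2 / (2*t)"
    by (simp add: diff_divide_distrib)
  finally have "- (x - z)\<^sup>2 / (2*t) \<le> - (x - 1)\<^sup>2 / (2*t) + - (\<bar>z\<bar> - 1)\<^sup>2 / (2*t)" .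
  then have "exp (- (x - z)\<^sup>2 / (2*t)) \<le> exp (- (x - 1)\<^sup>2 / (2*t)) * exp (- (\<bar>z\<bar> - 1)\<^sup>2 / (2*t))"
    by (simp add: exp_add[symmetric])
  then show ?thesis unfolding heatG_def using t by (simp add: divide_right_mono)
qed

lemma exp_neg_sq_div_eq_heatG: "t > 0 \<Longrightarrow> exp (- (z - c)\<^sup>2 / (8*t)) = sqrt (8*pi*t) * heatG (4*t) c z"
  unfolding heatG_def by (simp add: power2_commute mult_ac)

lemma heatG_mult_cosh_defect_le:
  assumes t: "t > 0" "t \<le> 1" and x: "x \<in> {0..1}"
  shows "heatG t x z * cosh_defect z
    \<le> heatG t x 1 * (2 * exp 2 * sqrt (8*t)) * (exp (- (z - 1)\<^sup>2 / (8*t)) + exp (- (z + 1)\<^sup>2 / (8*t)))"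
proof (cases "\<bar>z\<bar> \<le> 1")
  case True
  then show ?thesis using t by (simp add: cosh_defect_def heatG_nonneg)
next
  case False
  define v where "v = \<bar>z\<bar> - 1"
  have v0: "v \<ge> 0" using False v_def by simp
  have h0: "heatG t x 1 \<ge> 0" using t by (simp add: heatG_nonneg)
  have "heatG t x z * cosh_defect z \<le> heatG t x 1 * exp (- v\<^sup>2 / (2*t)) * cosh_defect z"
    using heatG_le_heatG_1_mult[OF t(1) x] False
    by (intro mult_right_mono cosh_defect_nonneg) (simp_all add: v_def)
  also have "\<dots> = heatG t x 1 * (2 * exp 1) * (v * exp v * exp (- v\<^sup>2 / (2*t)))"
    unfolding cosh_defect_def v_def using False by (simp add: max_def exp_diff field_simps)
  also have "\<dots> \<le> heatG t x 1 * (2 * exp 1) * (exp t * sqrt (8*t) * exp (- v\<^sup>2 / (8*t)))"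
    using h0 by (intro mult_left_mono mult_exp_mult_gauss_le t v0) auto
  also have "\<dots> = heatG t x 1 * (2 * (exp 1 * exp t) * sqrt (8*t)) * exp (- v\<^sup>2 / (8*t))"
    by (simp add: mult_ac)
  also have "\<dots> \<le> heatG t x 1 * (2 * exp 2 * sqrt (8*t)) * exp (- v\<^sup>2 / (8*t))"
  proof -
    have "exp 1 * exp t \<le> exp 2" using t by (simp add: exp_add[symmetric])
    then show ?thesis using h0 t by (intro mult_right_mono mult_left_mono) auto
  qed
  also have "v\<^sup>2 = (z - 1)\<^sup>2 \<or> v\<^sup>2 = (z + 1)\<^sup>2"
    unfolding v_def by (cases "z \<ge> 0") (auto simp: power2_eq_square algebra_simps)
  then have "exp (- v\<^sup>2 / (8*t)) \<le> exp (- (z - 1)\<^sup>2 / (8*t)) + exp (- (z + 1)\<^sup>2 / (8*t))"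
    by (auto simp: add_increasing add_increasing2)
  then have "heatG t x 1 * (2 * exp 2 * sqrt (8*t)) * exp (- v\<^sup>2 / (8*t))
      \<le> heatG t x 1 * (2 * exp 2 * sqrt (8*t)) * (exp (- (z - 1)\<^sup>2 / (8*t)) + exp (- (z + 1)\<^sup>2 / (8*t)))"
    using h0 t by (intro mult_left_mono) auto
  finally show ?thesis .
qed

definition cosh_defect_const :: real where
  "cosh_defect_const = 32 * exp 2 * sqrt pi"

lemma heatG_mult_cosh_defect_integral:
  assumes t: "t > 0" "t \<le> 1" and x: "x \<in> {0..1}"
  shows "(\<lambda>z. heatG t x z * cosh_defect z) integrable_on UNIV"
    and "integral UNIV (\<lambda>z. heatG t x z * cosh_defect z) \<le> cosh_defect_const * t * heatG t x 1"
proof -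
  define C where "C = heatG t x 1 * (2 * exp 2 * sqrt (8*t)) * sqrt (8*pi*t)"
  define B where "B z = C * (heatG (4*t) 1 z + heatG (4*t) (-1) z)" for z
  have "((\<lambda>z. heatG (4*t) 1 z + heatG (4*t) (-1) z) has_integral 1 + 1) UNIV"
    using t by (intro has_integral_add has_integral_heatG) auto
  from has_integral_mult_right[OF this, of C]
  have B: "(B has_integral C * 2) UNIV" by (simp add: B_def[abs_def])
  have le: "heatG t x z * cosh_defect z \<le> B z" for z
    using heatG_mult_cosh_defect_le[OF t x, of z] exp_neg_sq_div_eq_heatG[OF t(1), of z 1]
      exp_neg_sq_div_eq_heatG[OF t(1), of z "-1"]
    by (simp add: B_def C_def algebra_simps)
  show int: "(\<lambda>z. heatG t x z * cosh_defect z) integrable_on UNIV"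
  proof (rule integrable_on_all_intervals_integrable_bound[where g=B])
    show "(\<lambda>z. if z \<in> UNIV then heatG t x z * cosh_defect z else 0) integrable_on cbox a b" for a b
    proof -
      have "continuous_on {a..b} (\<lambda>z. heatG t x z * cosh_defect z)"
        using t by (intro continuous_intros) auto
      then show ?thesis by (simp add: integrable_continuous_interval)
    qed
    show "norm (heatG t x z * cosh_defect z) \<le> B z" for z
      using le[of z] heatG_nonneg[OF t(1)] cosh_defect_nonneg by simp
  qed (use B in blast)
  have "integral UNIV (\<lambda>z. heatG t x z * cosh_defect z) \<le> C * 2"
    using integral_le[OF int has_integral_integrable[OF B]] integral_unique[OF B] le by simp
  also have "C * 2 = cosh_defect_const * t * heatG t x 1"
  proof -
    have "sqrt (8*t) * sqrt (8*pi*t) = sqrt ((8*t)\<^sup>2 * pi)"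
      by (simp add: real_sqrt_mult[symmetric] power2_eq_square mult_ac)
    also have "\<dots> = 8 * t * sqrt pi" using t by (simp add: real_sqrt_mult)
    finally show ?thesis unfolding C_def cosh_defect_const_def by (simp add: mult_ac)
  qed
  finally show "integral UNIV (\<lambda>z. heatG t x z * cosh_defect z) \<le> cosh_defect_const * t * heatG t x 1" .
qed

lemma integral_Gneum_cosh_ge:
  assumes t: "0 < t" "t \<le> 1" and x: "x \<in> {0..1}"
  shows "exp (t/2) * cosh x - cosh_defect_const * t * heatG t x 1
    \<le> integral {0..1} (\<lambda>y. Gneum t x y * cosh y)"
proof -
  define \<phi> where "\<phi> z = heatG t x z * cosh z" for z
  define \<psi> where "\<psi> z = heatG t x z * cosh_defect z" for z
  define P where "P h k = integral {0..1} (\<lambda>y. h (2 * of_int k + y) + h (2 * of_int k - y))"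
    for h :: "real \<Rightarrow> real" and k :: int
  have cont: "continuous_on UNIV \<phi>" "continuous_on UNIV \<psi>"
    using t by (auto simp: \<phi>_def \<psi>_def intro!: continuous_intros)
  have int_pair: "(\<lambda>y. h (2 * of_int k + y) + h (2 * of_int k - y)) integrable_on {0..1}"
    if "continuous_on UNIV h" for h :: "real \<Rightarrow> real" and k :: int
    by (intro integrable_continuous_interval continuous_on_add continuous_on_compose2[OF that]
        continuous_intros) auto
  have \<phi>_int: "(\<phi> has_integral exp (t/2) * cosh x) UNIV"
    unfolding \<phi>_def by (rule has_integral_heatG_cosh[OF t(1)])
  have "(P \<phi> has_sum integral UNIV \<phi>) UNIV"
    unfolding P_def using t
    by (intro has_sum_integral_reflection_pairs cont has_integral_integrable[OF \<phi>_int])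
      (auto simp: \<phi>_def heatG_nonneg)
  then have h\<phi>: "(P \<phi> has_sum exp (t/2) * cosh x) UNIV"
    by (simp add: integral_unique[OF \<phi>_int])
  have h\<psi>: "(P \<psi> has_sum integral UNIV \<psi>) UNIV"
    unfolding P_def
    using heatG_mult_cosh_defect_integral(1)[OF t x] t
    by (intro has_sum_integral_reflection_pairs cont) (auto simp: \<psi>_def heatG_nonneg cosh_defect_nonneg)
  have "((\<lambda>k. P \<phi> k - P \<psi> k) has_sum exp (t/2) * cosh x - integral UNIV \<psi>) UNIV"
    using has_sum_add[OF h\<phi> has_sum_uminusI[OF h\<psi>]] by simp
  moreover have "((\<lambda>k. integral {0..1} (\<lambda>y. Gneum_term t x y k * cosh y))
      has_sum integral {0..1} (\<lambda>y. Gneum t x y * cosh y)) UNIV"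
    by (intro has_sum_integral_Gneum_term_mult t x continuous_intros)
  moreover have "P \<phi> k - P \<psi> k \<le> integral {0..1} (\<lambda>y. Gneum_term t x y k * cosh y)" for k
  proof -
    have "P \<phi> k - P \<psi> k = integral {0..1}
        (\<lambda>y. (\<phi> (2 * of_int k + y) + \<phi> (2 * of_int k - y)) - (\<psi> (2 * of_int k + y) + \<psi> (2 * of_int k - y)))"
      unfolding P_def using int_pair[OF cont(1)] int_pair[OF cont(2)] by (simp add: integral_diff)
    also have "\<dots> \<le> integral {0..1} (\<lambda>y. Gneum_term t x y k * cosh y)"
      using Gneum_term_mult_cosh_ge[OF t(1), of _ x k] t
      by (intro integral_le integrable_diff int_pair cont integrable_continuous_interval continuous_intros)
        (auto simp: \<phi>_def \<psi>_def algebra_simps)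
    finally show ?thesis .
  qed
  ultimately have "exp (t/2) * cosh x - integral UNIV \<psi> \<le> integral {0..1} (\<lambda>y. Gneum t x y * cosh y)"
    by (rule has_sum_mono)
  then show ?thesis
    using heatG_mult_cosh_defect_integral(2)[OF t x] unfolding \<psi>_def by linarith
qed

section \<open>Powers of the killed kernel\<close>

lemma integral_eq_integral_Icc_if_vanishing:
  fixes f :: "real \<Rightarrow> real"
  assumes "a \<le> c" "c \<le> b" and zero: "\<And>s. s \<in> {c<..b} \<Longrightarrow> f s = 0"
  shows "integral {a..b} f = integral {a..c} f"
proof -
  have "integral {a..b} f = integral {a..b} (\<lambda>s. if s \<in> {a..c} then f s else 0)"
    by (rule Henstock_Kurzweil_Integration.integral_cong) (use zero in auto)
  also have "\<dots> = integral ({a..c} \<inter> {a..b}) f"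
    by (rule Henstock_Kurzweil_Integration.integral_restrict_Int)
  also have "{a..c} \<inter> {a..b} = {a..c}" using assms by auto
  finally show ?thesis .
qed

lemma kpow_1: "kpow g (Suc 0) = g"
  by (simp add: kpow_def)

lemma kpow_Suc: "n \<ge> 1 \<Longrightarrow> kpow g (Suc n) = kcomp g (kpow g n)"
  by (cases n) (auto simp: kpow_def)

definition kmass :: "real \<Rightarrow> real \<Rightarrow> nat \<Rightarrow> real \<Rightarrow> real" where
  "kmass A \<delta> n x = integral {0..1} (\<lambda>y. kpow (g0 A \<delta>) n x y)"

context
  fixes A \<delta> :: real
  assumes \<delta>: "0 < \<delta>" "\<delta> \<le> 1" and A\<delta>: "0 \<le> A * \<delta>" "A * \<delta> \<le> 1"
begin

lemma kpow_g0_eq_0: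
  assumes "n \<ge> 1" "x \<notin> {0..1 - A * \<delta>} \<or> y \<notin> {0..1 - A * \<delta>}"
  shows "kpow (g0 A \<delta>) n x y = 0"
  using assms
proof (induction n arbitrary: x y rule: nat_induct_at_least)
  case base
  then show ?case by (auto simp: kpow_1 g0_def)
next
  case (Suc n)
  show ?case
  proof (cases "x \<in> {0..1 - A * \<delta>}")
    case False
    then have "g0 A \<delta> x s = 0" for s by (auto simp: g0_def)
    then show ?thesis using Suc.hyps by (simp add: kpow_Suc kcomp_def)
  next
    case True
    then have "kpow (g0 A \<delta>) n s y = 0" for s using Suc.IH Suc.prems by blast
    then show ?thesis using Suc.hyps by (simp add: kpow_Suc kcomp_def)
  qed
qed

lemma kpow_g0_Suc:
  assumes n: "n \<ge> 1" and x: "x \<in> {0..1 - A * \<delta>}"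
  shows "kpow (g0 A \<delta>) (Suc n) x y = integral {0..1 - A * \<delta>} (\<lambda>s. Gneum \<delta> x s * kpow (g0 A \<delta>) n s y)"
proof -
  have "kpow (g0 A \<delta>) (Suc n) x y = integral {0..1} (\<lambda>s. g0 A \<delta> x s * kpow (g0 A \<delta>) n s y)"
    using n by (simp add: kpow_Suc kcomp_def)
  also have "\<dots> = integral {0..1 - A * \<delta>} (\<lambda>s. g0 A \<delta> x s * kpow (g0 A \<delta>) n s y)"
    using A\<delta> by (intro integral_eq_integral_Icc_if_vanishing) (auto simp: g0_def)
  also have "\<dots> = integral {0..1 - A * \<delta>} (\<lambda>s. Gneum \<delta> x s * kpow (g0 A \<delta>) n s y)"
    by (rule Henstock_Kurzweil_Integration.integral_cong) (use x in \<open>simp add: g0_def\<close>)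
  finally show ?thesis .
qed

lemma continuous_on_Gneum_killed:
  "continuous_on ({0..1 - A * \<delta>} \<times> {0..1 - A * \<delta>}) (\<lambda>p. Gneum \<delta> (fst p) (snd p))"
  by (rule continuous_on_subset[OF continuous_on_Gneum[OF \<delta>(1)]]) (use A\<delta> in auto)

lemma continuous_on_kpow_g0:
  assumes "n \<ge> 1"
  shows "continuous_on ({0..1 - A * \<delta>} \<times> {0..1 - A * \<delta>}) (\<lambda>p. kpow (g0 A \<delta>) n (fst p) (snd p))"
  using assms
proof (induction n rule: nat_induct_at_least)
  case base
  show ?case
    by (rule continuous_on_eq[OF continuous_on_Gneum_killed]) (auto simp: kpow_1 g0_def)
next
  case (Suc n)
  let ?S = "{0..1 - A * \<delta>} \<times> {0..1 - A * \<delta>}"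
  have "continuous_on (?S \<times> cbox 0 (1 - A * \<delta>))
      (\<lambda>(p, s). Gneum \<delta> (fst p) s * kpow (g0 A \<delta>) n s (snd p))"
  proof -
    have "continuous_on (?S \<times> cbox 0 (1 - A * \<delta>)) (\<lambda>q. Gneum \<delta> (fst (fst q)) (snd q))"
      by (rule continuous_on_compose2[OF continuous_on_Gneum_killed, where f="\<lambda>q. (fst (fst q), snd q)",
            simplified]) (auto intro!: continuous_intros)
    moreover have "continuous_on (?S \<times> cbox 0 (1 - A * \<delta>)) (\<lambda>q. kpow (g0 A \<delta>) n (snd q) (snd (fst q)))"
      by (rule continuous_on_compose2[OF Suc.IH, where f="\<lambda>q. (snd q, snd (fst q))", simplified])
        (auto intro!: continuous_intros)
    ultimately show ?thesis by (simp add: case_prod_beta continuous_on_mult)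
  qed
  from integral_continuous_on_param[OF this]
  show ?case
    by (rule continuous_on_eq) (use Suc.hyps in \<open>auto simp: kpow_g0_Suc\<close>)
qed

lemma kmass_eq_integral_killed:
  "n \<ge> 1 \<Longrightarrow> kmass A \<delta> n x = integral {0..1 - A * \<delta>} (\<lambda>y. kpow (g0 A \<delta>) n x y)"
  unfolding kmass_def using A\<delta>
  by (intro integral_eq_integral_Icc_if_vanishing) (auto simp: kpow_g0_eq_0)

lemma continuous_on_kmass:
  assumes "n \<ge> 1"
  shows "continuous_on {0..1 - A * \<delta>} (kmass A \<delta> n)"
proof -
  have "continuous_on ({0..1 - A * \<delta>} \<times> cbox 0 (1 - A * \<delta>)) (\<lambda>(x, y). kpow (g0 A \<delta>) n x y)"
    using continuous_on_kpow_g0[OF assms] by (simp add: case_prod_beta)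
  from integral_continuous_on_param[OF this] show ?thesis
    by (rule continuous_on_eq) (simp add: kmass_eq_integral_killed[OF assms])
qed

lemma kmass_Suc:
  assumes n: "n \<ge> 1" and x: "x \<in> {0..1 - A * \<delta>}"
  shows "kmass A \<delta> (Suc n) x = integral {0..1 - A * \<delta>} (\<lambda>s. Gneum \<delta> x s * kmass A \<delta> n s)"
proof -
  let ?R = "1 - A * \<delta>"
  have "continuous_on ({0..?R} \<times> {0..?R}) (\<lambda>q. Gneum \<delta> x (fst q))"
    using A\<delta> x by (intro continuous_on_compose2[OF continuous_on_Gneum_right[OF \<delta>(1)]] continuous_intros) auto
  then have cont: "continuous_on (cbox (0, 0) (?R, ?R)) (\<lambda>(s, y). Gneum \<delta> x s * kpow (g0 A \<delta>) n s y)"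
    using continuous_on_mult[OF _ continuous_on_kpow_g0[OF n]] by (simp add: case_prod_beta cbox_Pair_eq)
  have "kmass A \<delta> (Suc n) x = integral {0..?R} (\<lambda>y. integral {0..?R} (\<lambda>s. Gneum \<delta> x s * kpow (g0 A \<delta>) n s y))"
    using n x by (simp add: kmass_eq_integral_killed kpow_g0_Suc)
  also have "\<dots> = integral {0..?R} (\<lambda>s. integral {0..?R} (\<lambda>y. Gneum \<delta> x s * kpow (g0 A \<delta>) n s y))"
    using integral_swap_continuous[OF cont] by simp
  also have "\<dots> = integral {0..?R} (\<lambda>s. Gneum \<delta> x s * kmass A \<delta> n s)"
    by (rule Henstock_Kurzweil_Integration.integral_cong) (simp add: kmass_eq_integral_killed[OF n])
  finally show ?thesis .
qed

end

section \<open>A barrier for the killed chain\<close>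

definition cosh_barrier :: "real \<Rightarrow> real \<Rightarrow> real \<Rightarrow> real" where
  "cosh_barrier c t y = c * (exp (t/2) * cosh y - cosh 1)"

lemma exp_half_le_2: "t \<le> 1 \<Longrightarrow> exp (t/2::real) \<le> 2"
proof -
  assume "t \<le> 1"
  then have "exp (t/2) \<le> exp (1/2::real)" by simp
  also have "exp (1/2::real) = sqrt (exp 1)"
  proof -
    have "exp (1::real) = (exp (1/2))\<^sup>2" by (simp add: power2_eq_square exp_add[symmetric])
    then show ?thesis by simp
  qed
  also have "\<dots> \<le> 2" using e_less_272 by (intro real_le_lsqrt) (auto simp: power2_eq_square)
  finally show ?thesis .
qed

lemma cosh_le_2: "y \<in> {0..1} \<Longrightarrow> cosh (y::real) \<le> 2"
proof -
  assume y: "y \<in> {0..1}"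
  have "cosh y \<le> cosh 1" using y by (subst cosh_real_nonneg_le_iff) auto
  also have "cosh (1::real) \<le> (exp 1 + 1) / 2"
    by (simp add: cosh_field_def exp_minus inverse_le_1_iff)
  finally show ?thesis using e_less_272 by simp
qed

lemma cosh_1_lt_exp_half: "cosh 1 < exp (1/2::real)"
proof -
  have "5/2 \<le> exp (1::real)" using exp_lower_Taylor_quadratic[of 1] by simp
  then have "inverse (exp 1) \<le> inverse (5/2::real)" by (intro le_imp_inverse_le) auto
  then have "cosh (1::real) \<le> (272/100 + 2/5) / 2"
    using e_less_272 by (simp add: cosh_field_def exp_minus)
  also have "\<dots> < (1 + 1/4) ^ 2" by (simp add: power2_eq_square)
  also have "\<dots> \<le> exp (1/2::real)" using exp_ge_one_plus_x_over_n_power_n[of 2 "1/2"] by simp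
  finally show ?thesis .
qed

lemma cosh_barrier_le: "0 \<le> c \<Longrightarrow> t \<le> 1 \<Longrightarrow> y \<in> {0..1} \<Longrightarrow> cosh_barrier c t y \<le> 4 * c"
proof -
  assume c: "0 \<le> c" and t: "t \<le> 1" and y: "y \<in> {0..1}"
  have "exp (t/2) * cosh y \<le> 2 * 2"
    using exp_half_le_2[OF t] cosh_le_2[OF y] by (intro mult_mono) auto
  then have "exp (t/2) * cosh y - cosh 1 \<le> 4" using cosh_real_ge_1[of 1] by linarith
  then show ?thesis unfolding cosh_barrier_def using c by (simp add: mult.commute mult_left_mono)
qed

lemma integral_Gneum_barrier_le:
  assumes \<delta>: "0 < \<delta>" "\<delta> \<le> 1" and x: "x \<in> {0..1}" and c: "0 \<le> c"
  shows "integral {0..1} (\<lambda>s. Gneum \<delta> x s * (1 - cosh_barrier c t s))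
    \<le> 1 - cosh_barrier c (t + \<delta>) x + c * exp (t/2) * cosh_defect_const * \<delta> * heatG \<delta> x 1"
proof -
  define J where "J = integral {0..1} (\<lambda>s. Gneum \<delta> x s * cosh s)"
  have "continuous_on {0..1} (\<lambda>s. Gneum \<delta> x s * cosh s)"
    by (intro continuous_intros continuous_on_Gneum_right[OF \<delta>(1) x]) auto
  then have J: "((\<lambda>s. Gneum \<delta> x s * cosh s) has_integral J) {0..1}"
    unfolding J_def by (intro integrable_integral integrable_continuous_interval)
  have "Gneum \<delta> x s * (1 - cosh_barrier c t s)
      = (1 + c * cosh 1) * Gneum \<delta> x s - c * exp (t/2) * (Gneum \<delta> x s * cosh s)" for s
    by (simp add: cosh_barrier_def algebra_simps)
  then have "integral {0..1} (\<lambda>s. Gneum \<delta> x s * (1 - cosh_barrier c t s))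
      = (1 + c * cosh 1) * 1 - c * exp (t/2) * J"
    by (simp only:) (intro integral_unique has_integral_diff has_integral_mult_right
        has_integral_Gneum[OF \<delta>(1) x] J)
  moreover have "c * exp (t/2) * (exp (\<delta>/2) * cosh x - cosh_defect_const * \<delta> * heatG \<delta> x 1)
      \<le> c * exp (t/2) * J"
    using integral_Gneum_cosh_ge[OF \<delta> x] c unfolding J_def by (intro mult_left_mono) auto
  moreover have "exp ((t + \<delta>)/2) = exp (t/2) * exp (\<delta>/2)"
    by (simp add: exp_add[symmetric] add_divide_distrib)
  ultimately show ?thesis
    unfolding cosh_barrier_def by (simp add: algebra_simps)
qed

lemma integral_Gneum_boundary_layer_ge:
  assumes \<delta>: "0 < \<delta>" and R: "0 \<le> R" "R \<le> 1" and x: "x \<in> {0..R}"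
    and F: "continuous_on {R..1} F" "\<And>s. s \<in> {R..1} \<Longrightarrow> 1/2 \<le> F s"
  shows "(1 - R) * (heatG \<delta> x 1 / 2) \<le> integral {R..1} (\<lambda>s. Gneum \<delta> x s * F s)"
proof -
  have "integral {R..1} (\<lambda>s. heatG \<delta> x 1 / 2) \<le> integral {R..1} (\<lambda>s. Gneum \<delta> x s * F s)"
  proof (rule integral_le)
    show "(\<lambda>s. Gneum \<delta> x s * F s) integrable_on {R..1}"
      using x R by (intro integrable_continuous_interval continuous_on_mult F
          continuous_on_Gneum_right[OF \<delta>]) auto
    show "heatG \<delta> x 1 / 2 \<le> Gneum \<delta> x s * F s" if s: "s \<in> {R..1}" for s
    proof -
      have "heatG \<delta> x 1 \<le> heatG \<delta> x s" by (rule heatG_antimono[OF \<delta>]) (use s x in auto)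
      also have "\<dots> \<le> Gneum \<delta> x s" by (rule heatG_le_Gneum[OF \<delta>]) (use s x R in auto)
      finally have "heatG \<delta> x 1 / 2 \<le> Gneum \<delta> x s * (1/2)" by simp
      also have "\<dots> \<le> Gneum \<delta> x s * F s"
        using F(2)[OF s] Gneum_nonneg[OF \<delta>, of x s] by (intro mult_left_mono) auto
      finally show ?thesis .
    qed
  qed (rule integrable_continuous_interval[OF continuous_on_const])
  then show ?thesis using R by simp
qed

context
  fixes A \<delta> :: real
  assumes \<delta>: "0 < \<delta>" "\<delta> \<le> 1" and A\<delta>: "0 \<le> A * \<delta>" "A * \<delta> \<le> 1"
begin

lemma barrier_step:
  assumes x: "x \<in> {0..1 - A * \<delta>}" and t: "0 \<le> t" "t \<le> 1"
    and c: "0 < c" "c \<le> 1/8" "c * cosh_defect_const \<le> A/4"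
    and m: "continuous_on {0..1 - A * \<delta>} m" "\<And>s. s \<in> {0..1 - A * \<delta>} \<Longrightarrow> m s \<le> 1 - cosh_barrier c t s"
  shows "integral {0..1 - A * \<delta>} (\<lambda>s. Gneum \<delta> x s * m s) \<le> 1 - cosh_barrier c (t + \<delta>) x"
proof -
  define R where "R = 1 - A * \<delta>"
  define F where "F s = 1 - cosh_barrier c t s" for s
  define h where "h = heatG \<delta> x 1"
  have R: "0 \<le> R" "R \<le> 1" and x1: "x \<in> {0..1}" using A\<delta> x by (auto simp: R_def)
  have GF: "continuous_on {0..1} (\<lambda>s. Gneum \<delta> x s * F s)"
    unfolding F_def cosh_barrier_def by (intro continuous_intros continuous_on_Gneum_right \<delta> x1) auto
  have "integral {0..R} (\<lambda>s. Gneum \<delta> x s * m s) \<le> integral {0..R} (\<lambda>s. Gneum \<delta> x s * F s)"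
  proof (rule integral_le)
    show "(\<lambda>s. Gneum \<delta> x s * m s) integrable_on {0..R}"
      using m(1) R x1 unfolding R_def
      by (intro integrable_continuous_interval continuous_on_mult continuous_on_Gneum_right[OF \<delta>(1)]) auto
    show "(\<lambda>s. Gneum \<delta> x s * F s) integrable_on {0..R}"
      using R by (intro integrable_continuous_interval continuous_on_subset[OF GF]) auto
    show "Gneum \<delta> x s * m s \<le> Gneum \<delta> x s * F s" if "s \<in> {0..R}" for s
      using m(2)[of s] that Gneum_nonneg[OF \<delta>(1), of x s] unfolding R_def F_def
      by (intro mult_left_mono) auto
  qed
  also have "\<dots> = integral {0..1} (\<lambda>s. Gneum \<delta> x s * F s) - integral {R..1} (\<lambda>s. Gneum \<delta> x s * F s)"
    using Henstock_Kurzweil_Integration.integral_combine[OF R integrable_continuous_interval[OF GF]]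
    by simp
  also have "\<dots> \<le> (1 - cosh_barrier c (t + \<delta>) x + c * exp (t/2) * cosh_defect_const * \<delta> * h)
      - (1 - R) * (h / 2)"
  proof (rule diff_mono)
    show "integral {0..1} (\<lambda>s. Gneum \<delta> x s * F s)
        \<le> 1 - cosh_barrier c (t + \<delta>) x + c * exp (t/2) * cosh_defect_const * \<delta> * h"
      unfolding F_def h_def using c(1) by (intro integral_Gneum_barrier_le[OF \<delta> x1]) simp
    show "(1 - R) * (h / 2) \<le> integral {R..1} (\<lambda>s. Gneum \<delta> x s * F s)"
      unfolding h_def
    proof (rule integral_Gneum_boundary_layer_ge[OF \<delta>(1) R])
      show "x \<in> {0..R}" using x by (simp add: R_def)
      show "continuous_on {R..1} F" unfolding F_def cosh_barrier_def by (intro continuous_intros)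
      show "1/2 \<le> F s" if "s \<in> {R..1}" for s
        using cosh_barrier_le[of c t s] c t that R unfolding F_def by auto
    qed
  qed
  also have "\<dots> \<le> 1 - cosh_barrier c (t + \<delta>) x"
  proof -
    have "c * exp (t/2) * cosh_defect_const \<le> c * 2 * cosh_defect_const"
      using exp_half_le_2[OF t(2)] c(1) by (intro mult_right_mono mult_left_mono) (auto simp: cosh_defect_const_def)
    moreover have "0 \<le> h" unfolding h_def using \<delta> by (simp add: heatG_nonneg)
    ultimately have "(c * exp (t/2) * cosh_defect_const - A / 2) * (\<delta> * h) \<le> 0"
      using c(3) \<delta> by (intro mult_nonpos_nonneg) auto
    then show ?thesis unfolding R_def by (simp add: algebra_simps)
  qed
  finally show ?thesis unfolding R_def .
qed

lemma kmass_le_barrier: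
  assumes c: "0 < c" "c \<le> 1/8" "c * cosh_defect_const \<le> A/4" and N: "\<delta> * (real N - 1) < 1"
    and n: "1 \<le> n" "n \<le> N"
  shows "\<forall>s\<in>{0..1 - A * \<delta>}. kmass A \<delta> n s \<le> 1 - cosh_barrier c (real n * \<delta>) s"
  using n
proof (induction n rule: nat_induct_at_least)
  case base
  show ?case
  proof
    fix s assume s: "s \<in> {0..1 - A * \<delta>}"
    have "kmass A \<delta> 1 s = integral {0..1 - A * \<delta>} (\<lambda>y. kpow (g0 A \<delta>) 1 s y)"
      by (rule kmass_eq_integral_killed[OF \<delta> A\<delta>]) simp
    also have "\<dots> = integral {0..1 - A * \<delta>} (\<lambda>y. Gneum \<delta> s y * 1)"
      by (rule Henstock_Kurzweil_Integration.integral_cong) (use s in \<open>simp add: kpow_1 g0_def\<close>)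
    also have "\<dots> \<le> 1 - cosh_barrier c (0 + \<delta>) s"
    proof (rule barrier_step[OF s order_refl zero_le_one c])
      show "1 \<le> 1 - cosh_barrier c 0 u" if "u \<in> {0..1 - A * \<delta>}" for u
        using that A\<delta> c(1) cosh_real_nonneg_le_iff[of u 1]
        by (auto simp: cosh_barrier_def mult_nonneg_nonpos)
    qed simp
    finally show "kmass A \<delta> 1 s \<le> 1 - cosh_barrier c (real 1 * \<delta>) s" by simp
  qed
next
  case (Suc n)
  have "real n \<le> real N - 1" using Suc.prems by simp
  then have "real n * \<delta> \<le> (real N - 1) * \<delta>" using \<delta> by (intro mult_right_mono) auto
  then have "real n * \<delta> \<le> 1" using N by (simp add: mult.commute)
  show ?case
  proof
    fix s assume s: "s \<in> {0..1 - A * \<delta>}"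
    have "kmass A \<delta> (Suc n) s = integral {0..1 - A * \<delta>} (\<lambda>u. Gneum \<delta> s u * kmass A \<delta> n u)"
      by (rule kmass_Suc[OF \<delta> A\<delta> Suc.hyps s])
    also have "\<dots> \<le> 1 - cosh_barrier c (real n * \<delta> + \<delta>) s"
      using Suc \<open>real n * \<delta> \<le> 1\<close> \<delta>
      by (intro barrier_step[OF s _ _ c continuous_on_kmass[OF \<delta> A\<delta> Suc.hyps]]) auto
    finally show "kmass A \<delta> (Suc n) s \<le> 1 - cosh_barrier c (real (Suc n) * \<delta>) s"
      by (simp add: algebra_simps)
  qed
qed

lemma kmass_le_1_minus:
  assumes c: "0 < c" "c \<le> 1/8" "c * cosh_defect_const \<le> A/4"
    and N: "\<delta> * (real N - 1) < 1" "1 \<le> \<delta> * real N" and r: "r \<in> {0..1 - A * \<delta>}"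
  shows "kmass A \<delta> N r \<le> 1 - c * (exp (1/2) - cosh 1)"
proof -
  have "N \<ge> 1" using N(2) by (cases N) auto
  then have "kmass A \<delta> N r \<le> 1 - cosh_barrier c (real N * \<delta>) r"
    using kmass_le_barrier[OF c N(1)] r by blast
  moreover have "exp (1/2) \<le> exp (real N * \<delta> / 2)" using N(2) by (simp add: mult.commute)
  then have "exp (1/2) \<le> exp (real N * \<delta> / 2) * cosh r"
    using cosh_real_ge_1[of r] by (smt (verit) mult_le_cancel_left1 exp_gt_zero)
  then have "c * (exp (1/2) - cosh 1) \<le> cosh_barrier c (real N * \<delta>) r"
    unfolding cosh_barrier_def using c(1) by (intro mult_left_mono) auto
  ultimately show ?thesis by simp
qed

end

theorem lemma3p4:
  fixes A :: real
  assumes "A > 0"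
  shows "\<exists>a>0. \<forall>\<^sub>F \<delta> in at_right (0::real). \<forall>N::nat.
           (\<delta> * (real N - 1) < 1 \<and> 1 \<le> \<delta> * real N) \<longrightarrow>
           (\<forall>r\<in>{0..1 - A*\<delta>}. integral {0..1} (\<lambda>r'. kpow (g0 A \<delta>) N r r') \<le> 1 - a)"
proof -
  define c where "c = min (1/8) (A / (4 * cosh_defect_const))"
  have c: "0 < c" "c \<le> 1/8" "c * cosh_defect_const \<le> A/4"
    using assms by (auto simp: c_def min_def field_simps cosh_defect_const_def)
  have "\<forall>\<^sub>F \<delta> in at_right (0::real). 0 < \<delta> \<and> \<delta> \<le> 1 \<and> 0 \<le> A * \<delta> \<and> A * \<delta> \<le> 1"
    unfolding eventually_at_right_field
    by (rule exI[of _ "min 1 (1/A)"]) (use assms in \<open>auto simp: field_simps\<close>)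
  then have "\<forall>\<^sub>F \<delta> in at_right (0::real). \<forall>N::nat. (\<delta> * (real N - 1) < 1 \<and> 1 \<le> \<delta> * real N) \<longrightarrow>
      (\<forall>r\<in>{0..1 - A*\<delta>}. kmass A \<delta> N r \<le> 1 - c * (exp (1/2) - cosh 1))"
  proof eventually_elim
    case (elim \<delta>)
    then show ?case by (intro allI impI ballI kmass_le_1_minus[OF _ _ _ _ c]) auto
  qed
  moreover have "0 < c * (exp (1/2) - cosh 1)"
    using c(1) cosh_1_lt_exp_half by simp
  ultimately show ?thesis unfolding kmass_def by blast
qed

end
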